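(* Let $G$ be a group, $N$ a normal subgroup, $k,l\in\mathbb{Z}_{\ge0}$ and $x_1,\dots,x_k,\check x_1,\dots,\check x_l\in N$ with $x_1+\cdots+x_k-\check x_1-\cdots-\check x_l\in\mathrm{B}'_1(G,N;\mathbb{Z})$. Then \[\|x_1+\cdots+x_k-\check x_1-\cdots-\check x_l\|'\le 4\,\mathrm{cl}_{G,N}(x_1+\cdots+x_k+\check x_1^{-1}+\cdots+\check x_l^{-1})-1+3(k+l).\]
   Context: $\mathrm{C}_1(G;A)$, $\mathrm{C}_2(G;A)$ are the free $A$-modules on $G$ and $G\times G$, $\partial(g_1,g_2)=g_2-g_1g_2+g_1$; $\mathrm{C}'_2(G,N;A)$ is generated by pairs with $g_1\in N$ or $g_2\in N$; $\mathrm{B}'_1(G,N;A)=\partial\mathrm{C}'_2(G,N;A)$. For $c\in\mathrm{B}'_1(G,N;\mathbb{R})$, $\|c\|'=\inf\{\|c'\|_1:c'\in\mathrm{C}'_2(G,N;\mathbb{R}),\partial c'=c\}$ with $\|\cdot\|_1$ the $\ell^1$-norm. $\mathrm{cl}_{G,N}$ is the word length on $[G,N]$ with respect to $\{[g,x]=gxg^{-1}x^{-1}:g\in G,x\in N\}$, and for $y_1,\dots,y_m\in N$ with product in $[G,N]$, $\mathrm{cl}_{G,N}(y_1+\cdots+y_m)=\inf_{g_i\in G}\mathrm{cl}_{G,N}(y_1g_1y_2g_1^{-1}\cdots g_{m-1}y_mg_{m-1}^{-1})$ (the hypothesis guarantees $x_1\cdots x_k\check x_1^{-1}\cdots\check x_l^{-1}\in[G,N]$).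 *)

theory Defs
  imports "HOL-Algebra.Algebra" "HOL-Analysis.Analysis"
begin

text \<open>Finitely supported chains. A 1-chain is a function from group elements to
coefficients; a 2-chain is a function from pairs of group elements to coefficients.\<close>

definition supp2 :: "('a \<times> 'a \<Rightarrow> 'r::zero) \<Rightarrow> ('a \<times> 'a) set" where
  "supp2 c = {p. c p \<noteq> 0}"

definition C2' :: "('a, 'b) monoid_scheme \<Rightarrow> 'a set \<Rightarrow> ('a \<times> 'a \<Rightarrow> 'r::zero) set" where
  "C2' G N = {c. finite (supp2 c) \<and>
     (\<forall>p \<in> supp2 c. fst p \<in> carrier G \<and> snd p \<in> carrier G \<and> (fst p \<in> N \<or> snd p \<in> N))}"

definition bd :: "('a, 'b) monoid_scheme \<Rightarrow> ('a \<times> 'a \<Rightarrow> 'r::comm_ring_1) \<Rightarrow> 'a \<Rightarrow> 'r" where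
  "bd G c = (\<lambda>h. \<Sum>p \<in> supp2 c. c p * (of_bool (h = snd p) - of_bool (h = fst p \<otimes>\<^bsub>G\<^esub> snd p)
                                       + of_bool (h = fst p)))"

definition B1' :: "('a, 'b) monoid_scheme \<Rightarrow> 'a set \<Rightarrow> ('a \<Rightarrow> 'r::comm_ring_1) set" where
  "B1' G N = bd G ` C2' G N"

definition l1norm :: "('a \<times> 'a \<Rightarrow> real) \<Rightarrow> real" where
  "l1norm c = (\<Sum>p \<in> supp2 c. \<bar>c p\<bar>)"

definition norm' :: "('a, 'b) monoid_scheme \<Rightarrow> 'a set \<Rightarrow> ('a \<Rightarrow> real) \<Rightarrow> real" where
  "norm' G N c = Inf {l1norm c' | c'. c' \<in> C2' G N \<and> bd G c' = c}"

definition chain_of :: "'a list \<Rightarrow> 'a \<Rightarrow> 'r::comm_ring_1" where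
  "chain_of ys = (\<lambda>h. of_nat (count_list ys h))"

definition commut :: "('a, 'b) monoid_scheme \<Rightarrow> 'a \<Rightarrow> 'a \<Rightarrow> 'a" where
  "commut G g x = g \<otimes>\<^bsub>G\<^esub> x \<otimes>\<^bsub>G\<^esub> inv\<^bsub>G\<^esub> g \<otimes>\<^bsub>G\<^esub> inv\<^bsub>G\<^esub> x"

definition cl :: "('a, 'b) monoid_scheme \<Rightarrow> 'a set \<Rightarrow> 'a \<Rightarrow> nat" where
  "cl G N y = (LEAST n. \<exists>ws. length ws = n \<and> set ws \<subseteq> carrier G \<times> N \<and>
      y = foldr (\<lambda>(g, x) acc. commut G g x \<otimes>\<^bsub>G\<^esub> acc) ws \<one>\<^bsub>G\<^esub>)"

text \<open>y_1 (g_1 y_2 g_1^-1) ... (g_{m-1} y_m g_{m-1}^-1) for ys = [y_1,...,y_m] (m >= 1).\<close>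
definition conj_prod :: "('a, 'b) monoid_scheme \<Rightarrow> 'a list \<Rightarrow> 'a list \<Rightarrow> 'a" where
  "conj_prod G ys gs = hd ys \<otimes>\<^bsub>G\<^esub>
     foldr (\<lambda>(g, y) acc. g \<otimes>\<^bsub>G\<^esub> y \<otimes>\<^bsub>G\<^esub> inv\<^bsub>G\<^esub> g \<otimes>\<^bsub>G\<^esub> acc) (zip gs (tl ys)) \<one>\<^bsub>G\<^esub>"

text \<open>cl_{G,N}(y_1 + ... + y_m) = inf over g_i in G of cl of the above product.\<close>
definition cl_sum :: "('a, 'b) monoid_scheme \<Rightarrow> 'a set \<Rightarrow> 'a list \<Rightarrow> nat" where
  "cl_sum G N ys = Inf {cl G N (conj_prod G ys gs) | gs.
      length gs = length ys - 1 \<and> set gs \<subseteq> carrier G}"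

end

theory Submission
  imports Defs
begin

text \<open>
  Choose \<open>g\<^sub>i\<close> realising \<open>cl\<^sub>G\<^sub>,\<^sub>N(x\<^sub>1 + \<dots> + x\<^sub>k + y\<^sub>1\<^sup>-\<^sup>1 + \<dots> + y\<^sub>l\<^sup>-\<^sup>1)\<close> and let \<open>u\<close> be the
  corresponding product \<open>x\<^sub>1 (g\<^sub>1 x\<^sub>2 g\<^sub>1\<^sup>-\<^sup>1) \<cdots>\<close>.  First, \<open>u \<in> [G,N]\<close>: let \<open>\<psi>(g) = g s\<^sup>-\<^sup>1\<close> for a
  chosen point \<open>s\<close> of \<open>Ng\<close> (with \<open>s = 1\<close> if \<open>g \<in> N\<close>).  Pushing 1-chains forward along
  \<open>h \<mapsto> [\<psi>(h)] \<in> N/[G,N]\<close> kills \<open>\<partial>(g\<^sub>1,g\<^sub>2)\<close> whenever \<open>g\<^sub>1 \<in> N\<close> or \<open>g\<^sub>2 \<in> N\<close>, hence kills the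
  given boundary, whereas it sends \<open>x\<^sub>1 + \<dots> + x\<^sub>k - y\<^sub>1 - \<dots> - y\<^sub>l\<close> to the class of \<open>u\<close>.
  (Without this, \<open>cl\<close> would be a \<open>LEAST\<close> over an empty set.)  So \<open>u = [h\<^sub>1,z\<^sub>1] \<cdots> [h\<^sub>n,z\<^sub>n]\<close>
  with \<open>n = cl(u)\<close>.

  The chain is then filled by telescoping a running element \<open>a \<in> N\<close> from \<open>1\<close> to \<open>u\<close> in two
  ways: multiplying \<open>a\<close> by a conjugate \<open>g x g\<^sup>-\<^sup>1\<close> costs three elementary 2-chains, by a
  commutator four, and the first factor one.  This gives \<open>3(k+l) - 2 + 4n\<close> terms of
  \<open>\<ell>\<^sup>1\<close>-norm at most one.
\<close>

section \<open>Fillings of 1-chains\<close>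

definition delta :: "'a \<Rightarrow> 'a \<Rightarrow> 'r::zero_neq_one" where
  "delta a = (\<lambda>h. of_bool (h = a))"

definition bd_pair :: "('a, 'b) monoid_scheme \<Rightarrow> 'a \<times> 'a \<Rightarrow> 'a \<Rightarrow> 'r::comm_ring_1" where
  "bd_pair G p = (\<lambda>h. delta (snd p) h - delta (fst p \<otimes>\<^bsub>G\<^esub> snd p) h + delta (fst p) h)"

lemma bd_eq: "bd G c = (\<lambda>h. \<Sum>p\<in>supp2 c. c p * bd_pair G p h)"
  by (simp add: bd_def bd_pair_def delta_def)

lemma chain_of_eq_sum_delta: "chain_of xs = (\<lambda>h. \<Sum>x\<leftarrow>xs. delta x h)"
  by (induction xs) (auto simp: chain_of_def delta_def fun_eq_iff)

definition chain2_of_list :: "(real \<times> ('a \<times> 'a)) list \<Rightarrow> 'a \<times> 'a \<Rightarrow> real" where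
  "chain2_of_list L = (\<lambda>q. \<Sum>(s, p)\<leftarrow>L. if p = q then s else 0)"

lemma chain2_of_list_Cons:
  "chain2_of_list ((s, p) # L) q = (if p = q then s else 0) + chain2_of_list L q"
  by (simp add: chain2_of_list_def)

lemma supp2_chain2_of_list: "supp2 (chain2_of_list L) \<subseteq> snd ` set L"
proof -
  have "chain2_of_list L q = 0" if "q \<notin> snd ` set L" for q
    using that by (induction L) (auto simp: chain2_of_list_def)
  then show ?thesis by (auto simp: supp2_def)
qed

lemma sum_chain2_of_list:
  assumes "finite S" "snd ` set L \<subseteq> S"
  shows "(\<Sum>q\<in>S. chain2_of_list L q * F q) = (\<Sum>(s, p)\<leftarrow>L. s * F p)"
  using assms(2)
proof (induction L)
  case Nil
  then show ?case by (simp add: chain2_of_list_def)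
next
  case (Cons a L)
  obtain s p where a: "a = (s, p)" by (cases a)
  have "(\<Sum>q\<in>S. chain2_of_list (a # L) q * F q)
      = (\<Sum>q\<in>S. if p = q then s * F q else 0) + (\<Sum>q\<in>S. chain2_of_list L q * F q)"
    unfolding sum.distrib[symmetric] by (rule sum.cong) (auto simp: a chain2_of_list_Cons distrib_right)
  then show ?case using Cons assms(1) by (simp add: a)
qed

lemma sum_abs_chain2_of_list:
  "finite S \<Longrightarrow> (\<Sum>q\<in>S. \<bar>chain2_of_list L q\<bar>) \<le> (\<Sum>(s, p)\<leftarrow>L. \<bar>s\<bar>)"
proof (induction L)
  case Nil
  then show ?case by (simp add: chain2_of_list_def)
next
  case (Cons a L)
  obtain s p where a: "a = (s, p)" by (cases a)
  have "(\<Sum>q\<in>S. \<bar>chain2_of_list (a # L) q\<bar>) \<le> (\<Sum>q\<in>S. (if p = q then \<bar>s\<bar> else 0) + \<bar>chain2_of_list L q\<bar>)"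
    by (rule sum_mono) (auto simp: a chain2_of_list_Cons abs_triangle_ineq)
  also have "\<dots> = (if p \<in> S then \<bar>s\<bar> else 0) + (\<Sum>q\<in>S. \<bar>chain2_of_list L q\<bar>)"
    using Cons.prems by (simp add: sum.distrib)
  also have "\<dots> \<le> \<bar>s\<bar> + (\<Sum>(s, p)\<leftarrow>L. \<bar>s\<bar>)"
    using Cons by (intro add_mono) auto
  finally show ?case by (simp add: a)
qed

definition admissible_terms :: "('a, 'b) monoid_scheme \<Rightarrow> 'a set \<Rightarrow> (real \<times> ('a \<times> 'a)) list \<Rightarrow> bool" where
  "admissible_terms G N L \<longleftrightarrow>
     (\<forall>(s, g1, g2) \<in> set L. \<bar>s\<bar> \<le> 1 \<and> g1 \<in> carrier G \<and> g2 \<in> carrier G \<and> (g1 \<in> N \<or> g2 \<in> N))"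

definition has_filling :: "('a, 'b) monoid_scheme \<Rightarrow> 'a set \<Rightarrow> nat \<Rightarrow> ('a \<Rightarrow> real) \<Rightarrow> bool" where
  "has_filling G N n c \<longleftrightarrow>
     (\<exists>L. admissible_terms G N L \<and> length L \<le> n \<and> c = (\<lambda>h. \<Sum>(s, p)\<leftarrow>L. s * bd_pair G p h))"

lemma norm'_le_filling:
  assumes "has_filling G N n c"
  shows "norm' G N c \<le> n"
proof -
  obtain L where L: "admissible_terms G N L" "length L \<le> n"
    and c: "c = (\<lambda>h. \<Sum>(s, p)\<leftarrow>L. s * bd_pair G p h)"
    using assms by (auto simp: has_filling_def)
  have fin: "finite (supp2 (chain2_of_list L))"
    using supp2_chain2_of_list finite_subset by blast
  have "chain2_of_list L \<in> C2' G N"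
    using fin supp2_chain2_of_list[of L] L(1) by (fastforce simp: C2'_def admissible_terms_def)
  moreover have "bd G (chain2_of_list L) = c"
  proof
    fix h
    have "bd G (chain2_of_list L) h = (\<Sum>q\<in>snd ` set L. chain2_of_list L q * bd_pair G q h)"
      unfolding bd_eq by (rule sum.mono_neutral_left) (use supp2_chain2_of_list in \<open>auto simp: supp2_def\<close>)
    then show "bd G (chain2_of_list L) h = c h"
      by (simp add: sum_chain2_of_list c)
  qed
  ultimately have "norm' G N c \<le> l1norm (chain2_of_list L)"
    unfolding norm'_def by (intro cInf_lower bdd_belowI[of _ 0]) (auto simp: l1norm_def)
  also have "\<dots> \<le> (\<Sum>(s, p)\<leftarrow>L. \<bar>s\<bar>)"
    unfolding l1norm_def by (rule sum_abs_chain2_of_list[OF fin])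
  also have "\<dots> \<le> (\<Sum>_\<leftarrow>L. 1)"
    using L(1) by (intro sum_list_mono) (auto simp: admissible_terms_def)
  also have "\<dots> \<le> n"
    using L(2) by (simp add: sum_list_triv)
  finally show ?thesis .
qed

lemma has_filling_zero: "has_filling G N 0 (\<lambda>h. 0)"
  by (auto simp: has_filling_def admissible_terms_def intro: exI[of _ "[]"])

lemma has_filling_add:
  assumes "has_filling G N n c" "has_filling G N m d"
    and "\<And>h. e h = c h + d h" "n + m \<le> k"
  shows "has_filling G N k e"
proof -
  obtain L M where "admissible_terms G N L" "length L \<le> n" "c = (\<lambda>h. \<Sum>(s, p)\<leftarrow>L. s * bd_pair G p h)"
    "admissible_terms G N M" "length M \<le> m" "d = (\<lambda>h. \<Sum>(s, p)\<leftarrow>M. s * bd_pair G p h)"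
    using assms(1,2) by (auto simp: has_filling_def)
  then show ?thesis
    using assms(3,4) unfolding has_filling_def admissible_terms_def
    by (intro exI[of _ "L @ M"]) auto
qed

lemma has_filling_neg:
  assumes "has_filling G N n c" "\<And>h. d h = - c h"
  shows "has_filling G N n d"
proof -
  obtain L where "admissible_terms G N L" "length L \<le> n" "c = (\<lambda>h. \<Sum>(s, p)\<leftarrow>L. s * bd_pair G p h)"
    using assms(1) by (auto simp: has_filling_def)
  moreover have "(\<Sum>(s, p)\<leftarrow>map (\<lambda>(s, p). (- s, p)) L. s * bd_pair G p h) = - (\<Sum>(s, p)\<leftarrow>L. s * bd_pair G p h)"
    for h :: 'a
    by (induction L) auto
  ultimately show ?thesis
    using assms(2) unfolding has_filling_def admissible_terms_def
    by (intro exI[of _ "map (\<lambda>(s, p). (- s, p)) L"]) auto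
qed

section \<open>The subgroup \<open>[G,N]\<close>\<close>

definition commut_prod :: "('a, 'b) monoid_scheme \<Rightarrow> ('a \<times> 'a) list \<Rightarrow> 'a" where
  "commut_prod G ws = foldr (\<lambda>(g, x) acc. commut G g x \<otimes>\<^bsub>G\<^esub> acc) ws \<one>\<^bsub>G\<^esub>"

definition commutator_subgroup :: "('a, 'b) monoid_scheme \<Rightarrow> 'a set \<Rightarrow> 'a set" where
  "commutator_subgroup G N = {commut_prod G ws | ws. set ws \<subseteq> carrier G \<times> N}"

lemma commut_prod_Nil [simp]: "commut_prod G [] = \<one>\<^bsub>G\<^esub>"
  and commut_prod_Cons [simp]: "commut_prod G ((g, x) # ws) = commut G g x \<otimes>\<^bsub>G\<^esub> commut_prod G ws"
  by (simp_all add: commut_prod_def)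

lemma cl_attained:
  assumes "y \<in> commutator_subgroup G N"
  obtains ws where "length ws = cl G N y" "set ws \<subseteq> carrier G \<times> N" "y = commut_prod G ws"
proof -
  have "\<exists>n ws. length ws = n \<and> set ws \<subseteq> carrier G \<times> N \<and> y = commut_prod G ws"
    using assms by (auto simp: commutator_subgroup_def)
  then have "\<exists>ws. length ws = cl G N y \<and> set ws \<subseteq> carrier G \<times> N \<and> y = commut_prod G ws"
    unfolding cl_def commut_prod_def by (rule LeastI_ex)
  then show thesis using that by blast
qed

context group
begin

lemma inv_mult_cancel_left [simp]: "x \<in> carrier G \<Longrightarrow> y \<in> carrier G \<Longrightarrow> inv x \<otimes> (x \<otimes> y) = y"
  by (simp add: m_assoc[symmetric])

lemma commut_closed [intro, simp]: "g \<in> carrier G \<Longrightarrow> x \<in> carrier G \<Longrightarrow> commut G g x \<in> carrier G"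
  by (simp add: commut_def)

lemma inv_commut: "g \<in> carrier G \<Longrightarrow> x \<in> carrier G \<Longrightarrow> inv (commut G g x) = commut G (x \<otimes> g) (inv x)"
  by (simp add: commut_def inv_mult_group m_assoc)

lemma commut_prod_closed [intro, simp]:
  "set ws \<subseteq> carrier G \<times> carrier G \<Longrightarrow> commut_prod G ws \<in> carrier G"
  by (induction ws) auto

lemma commut_prod_append:
  "set ws \<subseteq> carrier G \<times> carrier G \<Longrightarrow> set vs \<subseteq> carrier G \<times> carrier G \<Longrightarrow>
    commut_prod G (ws @ vs) = commut_prod G ws \<otimes> commut_prod G vs"
  by (induction ws) (auto simp: m_assoc)

lemma inv_commut_prod:
  "set ws \<subseteq> carrier G \<times> carrier G \<Longrightarrow>
    inv (commut_prod G ws) = commut_prod G (rev (map (\<lambda>(g, x). (x \<otimes> g, inv x)) ws))"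
proof (induction ws)
  case Nil
  then show ?case by simp
next
  case (Cons w ws)
  obtain g x where w: "w = (g, x)" by (cases w)
  have "set (rev (map (\<lambda>(g, x). (x \<otimes> g, inv x)) ws)) \<subseteq> carrier G \<times> carrier G"
    using Cons.prems by auto
  then show ?case
    using Cons w by (simp add: inv_mult_group inv_commut commut_prod_append)
qed

end

context normal
begin

lemma commut_mem: "g \<in> carrier G \<Longrightarrow> x \<in> H \<Longrightarrow> commut G g x \<in> H"
  by (simp add: commut_def inv_op_closed2)

lemma commut_in_commutator_subgroup:
  "g \<in> carrier G \<Longrightarrow> x \<in> H \<Longrightarrow> commut G g x \<in> commutator_subgroup G H"
  unfolding commutator_subgroup_def
  by (intro CollectI exI[of _ "[(g, x)]"]) (auto intro: commut_closed)

lemma commut_prod_mem: "set ws \<subseteq> carrier G \<times> H \<Longrightarrow> commut_prod G ws \<in> H"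
proof (induction ws)
  case (Cons w ws)
  then show ?case
    by (cases w) (auto intro: subgroup.m_closed[OF subgroup_axioms] commut_mem)
qed simp

lemma commutator_subgroup_subset: "commutator_subgroup G H \<subseteq> H"
  by (auto simp: commutator_subgroup_def commut_prod_mem)

lemma commutator_subgroup_is_subgroup: "subgroup (commutator_subgroup G H) G"
proof (rule subgroupI)
  show "commutator_subgroup G H \<subseteq> carrier G"
    using commutator_subgroup_subset by auto
  show "commutator_subgroup G H \<noteq> {}"
    by (auto simp: commutator_subgroup_def intro: exI[of _ "[]"])
next
  fix a b assume "a \<in> commutator_subgroup G H" "b \<in> commutator_subgroup G H"
  then obtain ws vs where ws: "set ws \<subseteq> carrier G \<times> H" and vs: "set vs \<subseteq> carrier G \<times> H"
    and ab: "a = commut_prod G ws" "b = commut_prod G vs"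
    by (auto simp: commutator_subgroup_def)
  have ws': "set ws \<subseteq> carrier G \<times> carrier G" and vs': "set vs \<subseteq> carrier G \<times> carrier G"
    using ws vs by auto
  let ?ws = "rev (map (\<lambda>(g, x). (x \<otimes> g, inv x)) ws)"
  have "inv a = commut_prod G ?ws" "set ?ws \<subseteq> carrier G \<times> H"
    using inv_commut_prod[OF ws'] ab ws by auto
  then show "inv a \<in> commutator_subgroup G H"
    unfolding commutator_subgroup_def by blast
  have "a \<otimes> b = commut_prod G (ws @ vs)" "set (ws @ vs) \<subseteq> carrier G \<times> H"
    using commut_prod_append[OF ws' vs'] ab ws vs by auto
  then show "a \<otimes> b \<in> commutator_subgroup G H"
    unfolding commutator_subgroup_def by blast
qed

lemma commutator_subgroup_normal: "commutator_subgroup G H \<lhd> G"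
proof -
  have "x \<otimes> w \<otimes> inv x \<in> commutator_subgroup G H"
    if x: "x \<in> carrier G" and w: "w \<in> commutator_subgroup G H" for x w
  proof -
    interpret W: subgroup "commutator_subgroup G H" G
      by (rule commutator_subgroup_is_subgroup)
    have "w \<in> H" using w commutator_subgroup_subset by auto
    moreover have "x \<otimes> w \<otimes> inv x = commut G x w \<otimes> w"
      using x W.mem_carrier[OF w] by (simp add: commut_def m_assoc)
    ultimately show ?thesis
      using x w by (auto intro: commut_in_commutator_subgroup)
  qed
  then show ?thesis
    using normal_inv_iff commutator_subgroup_is_subgroup by blast
qed

end

section \<open>Telescoping fillings\<close>

text \<open>\<open>(y, True)\<close> stands for \<open>y\<close> and \<open>(y, False)\<close> for \<open>y\<^sup>-\<^sup>1\<close>; the 1-chain of such a list counts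
  the latter as \<open>-y\<close>, as in \<open>x\<^sub>1 + \<dots> + x\<^sub>k - y\<^sub>1 - \<dots> - y\<^sub>l\<close>.\<close>

definition signed :: "('a, 'b) monoid_scheme \<Rightarrow> 'a \<times> bool \<Rightarrow> 'a" where
  "signed G t = (if snd t then fst t else inv\<^bsub>G\<^esub> (fst t))"

definition signed_delta :: "'a \<times> bool \<Rightarrow> 'a \<Rightarrow> 'r::comm_ring_1" where
  "signed_delta t = (\<lambda>h. if snd t then delta (fst t) h else - delta (fst t) h)"

lemma sum_signed_delta:
  "(\<Sum>t\<leftarrow>map (\<lambda>x. (x, True)) xs @ map (\<lambda>y. (y, False)) ys. signed_delta t h)
    = (chain_of xs h - chain_of ys h :: 'r::comm_ring_1)"
  by (simp add: chain_of_eq_sum_delta signed_delta_def o_def uminus_sum_list_map)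

definition conj_fold :: "('a, 'b) monoid_scheme \<Rightarrow> 'a list \<Rightarrow> 'a list \<Rightarrow> 'a" where
  "conj_fold G gs ys = foldr (\<lambda>(g, y) acc. g \<otimes>\<^bsub>G\<^esub> y \<otimes>\<^bsub>G\<^esub> inv\<^bsub>G\<^esub> g \<otimes>\<^bsub>G\<^esub> acc) (zip gs ys) \<one>\<^bsub>G\<^esub>"

lemma conj_fold_Nil [simp]: "conj_fold G gs [] = \<one>\<^bsub>G\<^esub>"
  and conj_fold_Cons [simp]:
    "conj_fold G (g # gs) (y # ys) = g \<otimes>\<^bsub>G\<^esub> y \<otimes>\<^bsub>G\<^esub> inv\<^bsub>G\<^esub> g \<otimes>\<^bsub>G\<^esub> conj_fold G gs ys"
  by (simp_all add: conj_fold_def)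

lemma conj_prod_Cons: "conj_prod G (y # ys) gs = y \<otimes>\<^bsub>G\<^esub> conj_fold G gs ys"
  by (simp add: conj_prod_def conj_fold_def)

lemma (in group) conj_fold_closed [intro, simp]:
  "set gs \<subseteq> carrier G \<Longrightarrow> set ys \<subseteq> carrier G \<Longrightarrow> conj_fold G gs ys \<in> carrier G"
proof (induction ys arbitrary: gs)
  case (Cons y ys)
  then show ?case
    by (cases gs) (simp_all add: conj_fold_def)
qed simp

context normal
begin

lemma signed_mem: "fst t \<in> H \<Longrightarrow> signed G t \<in> H"
  by (simp add: signed_def)

lemma has_filling_conj_step_pos:
  assumes a: "a \<in> H" and g: "g \<in> carrier G" and x: "x \<in> H"
  shows "has_filling G H 3 (\<lambda>h. delta (a \<otimes> (g \<otimes> x \<otimes> inv g)) h - delta a h - delta x h)"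
proof -
  define b where "b = a \<otimes> (g \<otimes> x \<otimes> inv g)"
  have "b \<in> H"
    using a g x by (simp add: b_def inv_op_closed2)
  moreover have bg: "b \<otimes> g = a \<otimes> g \<otimes> x"
    using a g x by (simp add: b_def m_assoc)
  ultimately show ?thesis
    using a g x unfolding has_filling_def b_def[symmetric]
    by (intro exI[of _ "[(1, (b, g)), (-1, (a \<otimes> g, x)), (-1, (a, g))]"] conjI)
      (auto simp: admissible_terms_def bd_pair_def fun_eq_iff bg)
qed

lemma has_filling_conj_step:
  assumes a: "a \<in> H" and g: "g \<in> carrier G" and t: "fst t \<in> H"
  shows "has_filling G H 3
    (\<lambda>h. delta (a \<otimes> (g \<otimes> signed G t \<otimes> inv g)) h - delta a h - signed_delta t h)"
proof (cases "snd t")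
  case True
  then show ?thesis
    using has_filling_conj_step_pos[OF a g t] by (simp add: signed_def signed_delta_def)
next
  case False
  define b where "b = a \<otimes> (g \<otimes> inv (fst t) \<otimes> inv g)"
  have b: "b \<in> H"
    using a g t by (simp add: b_def inv_op_closed2)
  have "b \<otimes> (g \<otimes> fst t \<otimes> inv g) = a"
    using a g t by (simp add: b_def m_assoc)
  then show ?thesis
    using False
    by (intro has_filling_neg[OF has_filling_conj_step_pos[OF b g t]])
      (simp add: signed_def signed_delta_def b_def[symmetric])
qed

lemma has_filling_commut_step:
  assumes a: "a \<in> H" and g: "g \<in> carrier G" and x: "x \<in> H"
  shows "has_filling G H 4 (\<lambda>h. delta (a \<otimes> commut G g x) h - delta a h)"
proof -
  define r where "r = a \<otimes> commut G g x"
  have "r \<in> H"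
    using a g x by (simp add: r_def commut_mem)
  moreover have rxg: "r \<otimes> (x \<otimes> g) = a \<otimes> g \<otimes> x"
    using a g x by (simp add: r_def commut_def m_assoc)
  ultimately show ?thesis
    using a g x unfolding has_filling_def r_def[symmetric]
    by (intro exI[of _ "[(1, (r, x \<otimes> g)), (-1, (a \<otimes> g, x)), (-1, (a, g)), (1, (x, g))]"] conjI)
      (auto simp: admissible_terms_def bd_pair_def fun_eq_iff rxg)
qed

lemma has_filling_first_step:
  assumes "fst t \<in> H"
  shows "has_filling G H 1 (\<lambda>h. delta (signed G t) h - delta \<one> h - signed_delta t h)"
proof (cases "snd t")
  case True
  then show ?thesis
    unfolding has_filling_def
    by (intro exI[of _ "[(-1, (\<one>, \<one>))]"] conjI)
      (auto simp: admissible_terms_def bd_pair_def signed_def signed_delta_def fun_eq_iff)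
next
  case False
  then show ?thesis
    using assms unfolding has_filling_def
    by (intro exI[of _ "[(1, (fst t, inv (fst t)))]"] conjI)
      (auto simp: admissible_terms_def bd_pair_def signed_def signed_delta_def fun_eq_iff)
qed

lemma has_filling_conj_fold:
  assumes "a \<in> H" "set gs \<subseteq> carrier G" "length gs = length T" "fst ` set T \<subseteq> H"
  shows "has_filling G H (3 * length T)
    (\<lambda>h. delta (a \<otimes> conj_fold G gs (map (signed G) T)) h - delta a h - (\<Sum>t\<leftarrow>T. signed_delta t h))"
  using assms
proof (induction T arbitrary: a gs)
  case Nil
  then show ?case
    by (intro has_filling_add[OF has_filling_zero has_filling_zero]) auto
next
  case (Cons t T)
  then obtain g gs' where gs: "gs = g # gs'" and g: "g \<in> carrier G" and gs': "set gs' \<subseteq> carrier G"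
    "length gs' = length T"
    by (cases gs) auto
  define b where "b = a \<otimes> (g \<otimes> signed G t \<otimes> inv g)"
  have t: "fst t \<in> H" and T: "fst ` set T \<subseteq> H"
    using Cons.prems by auto
  have "b \<in> H"
    using Cons.prems(1) g signed_mem[OF t] by (simp add: b_def inv_op_closed2)
  moreover have "a \<otimes> conj_fold G gs (map (signed G) (t # T)) = b \<otimes> conj_fold G gs' (map (signed G) T)"
    using Cons.prems(1) g gs' signed_mem[OF t] signed_mem T
    by (simp add: gs b_def m_assoc image_subset_iff)
  ultimately show ?case
    by (intro has_filling_add[OF has_filling_conj_step[OF Cons.prems(1) g t] Cons.IH[OF _ gs' T]])
      (simp_all add: b_def, linarith)
qed

lemma has_filling_commut_prod:
  assumes "a \<in> H" "set ws \<subseteq> carrier G \<times> H"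
  shows "has_filling G H (4 * length ws) (\<lambda>h. delta (a \<otimes> commut_prod G ws) h - delta a h)"
  using assms
proof (induction ws arbitrary: a)
  case Nil
  then show ?case
    using has_filling_zero[of G H] by simp
next
  case (Cons w ws)
  then obtain g x where w: "w = (g, x)" and g: "g \<in> carrier G" and x: "x \<in> H"
    and ws: "set ws \<subseteq> carrier G \<times> H"
    by (cases w) auto
  have "a \<otimes> commut G g x \<in> H"
    using Cons.prems(1) g x by (simp add: commut_mem)
  moreover have "a \<otimes> commut_prod G (w # ws) = a \<otimes> commut G g x \<otimes> commut_prod G ws"
    using Cons.prems(1) g x commut_prod_mem[OF ws] by (simp add: w m_assoc)
  ultimately show ?case
    by (intro has_filling_add[OF has_filling_commut_step[OF Cons.prems(1) g x] Cons.IH[OF _ ws]])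
      (simp_all, linarith)
qed

lemma has_filling_signed_sum:
  assumes T: "T \<noteq> []" "fst ` set T \<subseteq> H"
    and gs: "set gs \<subseteq> carrier G" "length gs = length T - 1"
    and ws: "set ws \<subseteq> carrier G \<times> H"
    and eq: "conj_prod G (map (signed G) T) gs = commut_prod G ws"
  shows "has_filling G H (3 * length T + 4 * length ws - 2) (\<lambda>h. \<Sum>t\<leftarrow>T. signed_delta t h)"
proof -
  obtain t T' where T': "T = t # T'"
    using T(1) by (cases T) auto
  have t: "fst t \<in> H" and "fst ` set T' \<subseteq> H"
    using T(2) T' by auto
  note first = has_filling_first_step[OF t]
  note rest = has_filling_conj_fold[OF signed_mem[OF t] gs(1) _ \<open>fst ` set T' \<subseteq> H\<close>]
  note comms = has_filling_commut_prod[OF subgroup.one_closed[OF subgroup_axioms] ws]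
  have "signed G t \<otimes> conj_fold G gs (map (signed G) T') = commut_prod G ws"
    using eq by (simp add: T' conj_prod_Cons)
  moreover have "commut_prod G ws \<in> carrier G"
    using commut_prod_mem[OF ws] by auto
  ultimately show ?thesis
    using gs(2)
    by (intro has_filling_add[OF comms has_filling_neg[OF has_filling_add[OF first rest]]])
      (auto simp: T')
qed

end

section \<open>The coinvariants \<open>N/[G,N]\<close>\<close>

definition coinv :: "('a, 'b) monoid_scheme \<Rightarrow> 'a set \<Rightarrow> 'a set monoid" where
  "coinv G N = G\<lparr>carrier := N\<rparr> Mod commutator_subgroup G N"

definition coinv_class :: "('a, 'b) monoid_scheme \<Rightarrow> 'a set \<Rightarrow> 'a \<Rightarrow> 'a set" where
  "coinv_class G N a = commutator_subgroup G N #>\<^bsub>G\<^esub> a"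

context normal
begin

lemma commutator_subgroup_normal_restrict: "commutator_subgroup G H \<lhd> G\<lparr>carrier := H\<rparr>"
  by (intro normal_restrict_supergroup subgroup_axioms commutator_subgroup_normal
      commutator_subgroup_subset)

lemma carrier_coinv: "carrier (coinv G H) = coinv_class G H ` H"
  by (simp add: coinv_def coinv_class_def carrier_FactGroup)

lemma coinv_class_mult:
  "a \<in> carrier G \<Longrightarrow> b \<in> carrier G \<Longrightarrow>
    coinv_class G H (a \<otimes> b) = coinv_class G H a \<otimes>\<^bsub>coinv G H\<^esub> coinv_class G H b"
  using normal.rcos_sum[OF commutator_subgroup_normal]
  by (simp add: coinv_def coinv_class_def)

lemma coinv_class_eq_one_iff:
  assumes "a \<in> carrier G"
  shows "coinv_class G H a = \<one>\<^bsub>coinv G H\<^esub> \<longleftrightarrow> a \<in> commutator_subgroup G H"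
proof -
  have "commutator_subgroup G H #> a = commutator_subgroup G H \<longleftrightarrow> a \<in> commutator_subgroup G H"
    using coset_join1[OF _ assms commutator_subgroup_is_subgroup]
      coset_join2[OF assms commutator_subgroup_is_subgroup] by blast
  then show ?thesis
    by (simp add: coinv_def coinv_class_def)
qed

lemma coinv_class_eqI:
  assumes "a \<in> carrier G" "b \<in> carrier G" "a \<otimes> inv b \<in> commutator_subgroup G H"
  shows "coinv_class G H a = coinv_class G H b"
proof -
  interpret W: subgroup "commutator_subgroup G H" G
    by (rule commutator_subgroup_is_subgroup)
  have "a \<in> commutator_subgroup G H #> b"
    by (rule W.rcos_module_rev[OF is_group assms(2,1,3)])
  from repr_independence[OF this assms(2) W.subgroup_axioms] show ?thesis
    by (simp add: coinv_class_def)
qed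

lemma coinv_class_conj:
  assumes "g \<in> carrier G" "y \<in> H"
  shows "coinv_class G H (g \<otimes> y \<otimes> inv g) = coinv_class G H y"
proof (rule coinv_class_eqI)
  show "g \<otimes> y \<otimes> inv g \<otimes> inv y \<in> commutator_subgroup G H"
    using commut_in_commutator_subgroup[OF assms] by (simp add: commut_def)
qed (use assms in auto)

lemma coinv_comm_group: "comm_group (coinv G H)"
proof -
  interpret Q: group "coinv G H"
    unfolding coinv_def by (rule normal.factorgroup_is_group[OF commutator_subgroup_normal_restrict])
  show ?thesis
  proof (rule Q.group_comm_groupI)
    fix U V assume "U \<in> carrier (coinv G H)" "V \<in> carrier (coinv G H)"
    then obtain a b where ab: "a \<in> H" "b \<in> H" "U = coinv_class G H a" "V = coinv_class G H b"
      by (auto simp: carrier_coinv)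
    have "coinv_class G H (a \<otimes> b) = coinv_class G H (b \<otimes> a)"
    proof (rule coinv_class_eqI)
      show "a \<otimes> b \<otimes> inv (b \<otimes> a) \<in> commutator_subgroup G H"
        using commut_in_commutator_subgroup[of a b] ab
        by (simp add: commut_def inv_mult_group m_assoc)
    qed (use ab in auto)
    then show "U \<otimes>\<^bsub>coinv G H\<^esub> V = V \<otimes>\<^bsub>coinv G H\<^esub> U"
      using ab by (simp add: coinv_class_mult[symmetric])
  qed
qed

lemma coinv_class_closed [intro, simp]: "a \<in> H \<Longrightarrow> coinv_class G H a \<in> carrier (coinv G H)"
  by (simp add: carrier_coinv)

lemma coinv_class_inv:
  assumes "a \<in> H"
  shows "coinv_class G H (inv a) = inv\<^bsub>coinv G H\<^esub> coinv_class G H a"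
proof -
  interpret Q: comm_group "coinv G H"
    by (rule coinv_comm_group)
  have "coinv_class G H (inv a) \<otimes>\<^bsub>coinv G H\<^esub> coinv_class G H a = \<one>\<^bsub>coinv G H\<^esub>"
    using assms by (simp add: coinv_class_mult[symmetric] coinv_class_eq_one_iff
        subgroup.one_closed[OF commutator_subgroup_is_subgroup])
  then show ?thesis
    using assms by (intro Q.inv_equality[symmetric]) auto
qed

end

definition coset_rep :: "('a, 'b) monoid_scheme \<Rightarrow> 'a set \<Rightarrow> 'a \<Rightarrow> 'a" where
  "coset_rep G N g = (if N #>\<^bsub>G\<^esub> g = N then \<one>\<^bsub>G\<^esub> else (SOME r. r \<in> N #>\<^bsub>G\<^esub> g))"

definition coset_retract :: "('a, 'b) monoid_scheme \<Rightarrow> 'a set \<Rightarrow> 'a \<Rightarrow> 'a" where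
  "coset_retract G N g = g \<otimes>\<^bsub>G\<^esub> inv\<^bsub>G\<^esub> coset_rep G N g"

context normal
begin

lemma coset_rep_mem: "g \<in> carrier G \<Longrightarrow> coset_rep G H g \<in> H #> g"
  using rcos_self[OF _ subgroup_axioms] someI[of "\<lambda>r. r \<in> H #> g" g]
  by (auto simp: coset_rep_def)

lemma coset_rep_closed [intro, simp]: "g \<in> carrier G \<Longrightarrow> coset_rep G H g \<in> carrier G"
  using coset_rep_mem r_coset_subset_G[OF subset] by blast

lemma coset_retract_mem:
  assumes "g \<in> carrier G"
  shows "coset_retract G H g \<in> H"
proof -
  have "coset_rep G H g \<otimes> inv g \<in> H"
    by (rule rcos_module_imp[OF is_group assms coset_rep_mem[OF assms]])
  then have "inv (coset_rep G H g \<otimes> inv g) \<in> H"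
    by (rule subgroup.m_inv_closed[OF subgroup_axioms])
  then show ?thesis
    using assms by (simp add: coset_retract_def inv_mult_group)
qed

lemma coset_retract_id: "g \<in> H \<Longrightarrow> coset_retract G H g = g"
  by (simp add: coset_retract_def coset_rep_def rcos_const[OF is_group])

lemma coset_retract_mult:
  assumes g1: "g1 \<in> carrier G" and g2: "g2 \<in> carrier G" and "g1 \<in> H \<or> g2 \<in> H"
  shows "coinv_class G H (coset_retract G H (g1 \<otimes> g2))
    = coinv_class G H (coset_retract G H g1) \<otimes>\<^bsub>coinv G H\<^esub> coinv_class G H (coset_retract G H g2)"
proof (cases "g1 \<in> H")
  case True
  have "H #> (g1 \<otimes> g2) = H #> g2"
    using g1 g2 coset_mult_assoc[OF subset g1 g2] rcos_const[OF is_group True] by simp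
  then have "coset_rep G H (g1 \<otimes> g2) = coset_rep G H g2"
    by (simp add: coset_rep_def)
  then have "coset_retract G H (g1 \<otimes> g2) = g1 \<otimes> coset_retract G H g2"
    using g1 g2 by (simp add: coset_retract_def m_assoc)
  then show ?thesis
    using True g2 by (simp add: coinv_class_mult coset_retract_id coset_retract_mem)
next
  case False
  then have h2: "g2 \<in> H"
    using assms(3) by blast
  define s where "s = coset_rep G H g1"
  have s: "s \<in> carrier G"
    using g1 by (simp add: s_def)
  have "g1 \<otimes> g2 \<in> H #> g1"
    using g1 g2 h2 by (intro rcos_module_rev[OF is_group]) (auto simp: inv_op_closed2)
  then have "H #> (g1 \<otimes> g2) = H #> g1"
    using repr_independence[OF _ g1 subgroup_axioms] by simp
  then have "coset_rep G H (g1 \<otimes> g2) = s"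
    by (simp add: coset_rep_def s_def)
  then have "coset_retract G H (g1 \<otimes> g2) = coset_retract G H g1 \<otimes> (s \<otimes> g2 \<otimes> inv s)"
    using g1 g2 s by (simp add: coset_retract_def s_def[symmetric] m_assoc)
  then have "coinv_class G H (coset_retract G H (g1 \<otimes> g2))
      = coinv_class G H (coset_retract G H g1) \<otimes>\<^bsub>coinv G H\<^esub> coinv_class G H (s \<otimes> g2 \<otimes> inv s)"
    using g1 g2 s coset_retract_mem by (simp add: coinv_class_mult)
  then show ?thesis
    using s h2 by (simp add: coinv_class_conj coset_retract_id)
qed

end

text \<open>The pushforward \<open>f \<mapsto> \<Prod> [\<psi>(h)]\<^bsup>f(h)\<^esup>\<close> of an integer 1-chain, computed over a finite
  set \<open>S\<close> that must contain its support.\<close>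

definition chain_class :: "('a, 'b) monoid_scheme \<Rightarrow> 'a set \<Rightarrow> 'a set \<Rightarrow> ('a \<Rightarrow> int) \<Rightarrow> 'a set" where
  "chain_class G N S f =
     (\<Otimes>\<^bsub>coinv G N\<^esub> h\<in>S. coinv_class G N (coset_retract G N h) [^]\<^bsub>coinv G N\<^esub> f h)"

locale normal_finite_support = normal H G for H and G (structure) +
  fixes S
  assumes finite_S: "finite S" and S_carrier: "S \<subseteq> carrier G"
begin

sublocale Q: comm_group "coinv G H"
  by (rule coinv_comm_group)

abbreviation point_class :: "'a \<Rightarrow> 'a set" where
  "point_class h \<equiv> coinv_class G H (coset_retract G H h)"

lemma point_class_closed: "h \<in> S \<Longrightarrow> point_class h \<in> carrier (coinv G H)"
  using S_carrier by (intro coinv_class_closed coset_retract_mem) auto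

lemma chain_class_closed: "chain_class G H S f \<in> carrier (coinv G H)"
  unfolding chain_class_def by (intro Q.finprod_closed Pi_I Q.int_pow_closed point_class_closed)

lemma chain_class_add:
  "chain_class G H S (\<lambda>h. f h + g h) = chain_class G H S f \<otimes>\<^bsub>coinv G H\<^esub> chain_class G H S g"
proof -
  have "chain_class G H S (\<lambda>h. f h + g h) = (\<Otimes>\<^bsub>coinv G H\<^esub> h\<in>S.
      point_class h [^]\<^bsub>coinv G H\<^esub> f h \<otimes>\<^bsub>coinv G H\<^esub> point_class h [^]\<^bsub>coinv G H\<^esub> g h)"
    unfolding chain_class_def
    by (intro Q.finprod_cong' refl Q.int_pow_mult point_class_closed)
      (intro Pi_I Q.m_closed Q.int_pow_closed point_class_closed)
  also have "\<dots> = chain_class G H S f \<otimes>\<^bsub>coinv G H\<^esub> chain_class G H S g"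
    unfolding chain_class_def
    by (rule Q.finprod_multf) (auto intro: point_class_closed)
  finally show ?thesis .
qed

lemma chain_class_zero: "chain_class G H S (\<lambda>h. 0) = \<one>\<^bsub>coinv G H\<^esub>"
  by (simp add: chain_class_def)

lemma chain_class_uminus:
  "chain_class G H S (\<lambda>h. - f h) = inv\<^bsub>coinv G H\<^esub> chain_class G H S f"
proof -
  have "chain_class G H S (\<lambda>h. - f h) \<otimes>\<^bsub>coinv G H\<^esub> chain_class G H S f = \<one>\<^bsub>coinv G H\<^esub>"
    using chain_class_add[of "\<lambda>h. - f h" f] by (simp add: chain_class_zero)
  then show ?thesis
    using chain_class_closed by (intro Q.inv_equality[symmetric]) auto
qed

lemma chain_class_diff:
  "chain_class G H S (\<lambda>h. f h - g h) = chain_class G H S f \<otimes>\<^bsub>coinv G H\<^esub> inv\<^bsub>coinv G H\<^esub> chain_class G H S g"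
  using chain_class_add[of f "\<lambda>h. - g h"] by (simp add: chain_class_uminus)

lemma chain_class_sum:
  "finite P \<Longrightarrow> chain_class G H S (\<lambda>h. \<Sum>p\<in>P. F p h) = (\<Otimes>\<^bsub>coinv G H\<^esub> p\<in>P. chain_class G H S (F p))"
proof (induction P rule: finite_induct)
  case empty
  then show ?case by (simp add: chain_class_zero)
next
  case (insert p P)
  then show ?case
    using chain_class_closed by (simp add: chain_class_add)
qed

lemma chain_class_delta:
  assumes "a \<in> S"
  shows "chain_class G H S (\<lambda>h. k * delta a h) = point_class a [^]\<^bsub>coinv G H\<^esub> k"
proof -
  have "chain_class G H S (\<lambda>h. k * delta a h)
      = (\<Otimes>\<^bsub>coinv G H\<^esub> h\<in>S. if a = h then point_class h [^]\<^bsub>coinv G H\<^esub> k else \<one>\<^bsub>coinv G H\<^esub>)"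
    unfolding chain_class_def
    by (intro Q.finprod_cong' refl Pi_I) (auto simp: delta_def point_class_closed)
  also have "\<dots> = point_class a [^]\<^bsub>coinv G H\<^esub> k"
    by (intro Q.finprod_singleton[OF assms finite_S] Pi_I Q.int_pow_closed point_class_closed)
  finally show ?thesis .
qed

lemma chain_class_bd_pair:
  assumes "a \<in> carrier G" "b \<in> carrier G" "a \<in> H \<or> b \<in> H" "a \<in> S" "b \<in> S" "a \<otimes> b \<in> S"
  shows "chain_class G H S (\<lambda>h. k * bd_pair G (a, b) h) = \<one>\<^bsub>coinv G H\<^esub>"
proof -
  have "chain_class G H S (\<lambda>h. k * bd_pair G (a, b) h)
      = chain_class G H S (\<lambda>h. (k * delta a h + k * delta b h) - k * delta (a \<otimes> b) h)"
    by (simp add: bd_pair_def algebra_simps)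
  also have "\<dots> = (point_class a [^]\<^bsub>coinv G H\<^esub> k \<otimes>\<^bsub>coinv G H\<^esub> point_class b [^]\<^bsub>coinv G H\<^esub> k)
      \<otimes>\<^bsub>coinv G H\<^esub> inv\<^bsub>coinv G H\<^esub> (point_class (a \<otimes> b) [^]\<^bsub>coinv G H\<^esub> k)"
    using assms by (simp only: chain_class_diff chain_class_add chain_class_delta)
  also have "point_class (a \<otimes> b) [^]\<^bsub>coinv G H\<^esub> k
      = point_class a [^]\<^bsub>coinv G H\<^esub> k \<otimes>\<^bsub>coinv G H\<^esub> point_class b [^]\<^bsub>coinv G H\<^esub> k"
    using assms by (simp add: coset_retract_mult Q.int_pow_distrib point_class_closed)
  finally show ?thesis
    using assms by (simp add: point_class_closed)
qed

lemma chain_class_bd: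
  assumes c: "c \<in> C2' G H"
    and S: "\<And>p. p \<in> supp2 c \<Longrightarrow> fst p \<in> S \<and> snd p \<in> S \<and> fst p \<otimes> snd p \<in> S"
  shows "chain_class G H S (bd G c) = \<one>\<^bsub>coinv G H\<^esub>"
proof -
  have "finite (supp2 c)"
    using c by (simp add: C2'_def)
  then have "chain_class G H S (bd G c) = (\<Otimes>\<^bsub>coinv G H\<^esub> p\<in>supp2 c. chain_class G H S (\<lambda>h. c p * bd_pair G p h))"
    unfolding bd_eq by (rule chain_class_sum)
  also have "\<dots> = \<one>\<^bsub>coinv G H\<^esub>"
  proof (rule Q.finprod_one_eqI)
    fix p assume p: "p \<in> supp2 c"
    then have "fst p \<in> carrier G" "snd p \<in> carrier G" "fst p \<in> H \<or> snd p \<in> H"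
      using c by (auto simp: C2'_def)
    with S[OF p] show "chain_class G H S (\<lambda>h. c p * bd_pair G p h) = \<one>\<^bsub>coinv G H\<^esub>"
      using chain_class_bd_pair[of "fst p" "snd p"] by simp
  qed
  finally show ?thesis .
qed

lemma chain_class_signed_delta:
  assumes "fst t \<in> H" "fst t \<in> S"
  shows "chain_class G H S (signed_delta t) = coinv_class G H (signed G t)"
proof -
  have "chain_class G H S (\<lambda>h. delta (fst t) h) = coinv_class G H (fst t)"
    using chain_class_delta[OF assms(2), of 1] assms by (simp add: coset_retract_id point_class_closed)
  then show ?thesis
    using assms chain_class_uminus[of "delta (fst t)"]
    by (auto simp: signed_def signed_delta_def coinv_class_inv)
qed

lemma coinv_class_conj_fold:
  assumes "set gs \<subseteq> carrier G" "length gs = length T" "fst ` set T \<subseteq> H \<inter> S"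
  shows "coinv_class G H (conj_fold G gs (map (signed G) T))
    = chain_class G H S (\<lambda>h. \<Sum>t\<leftarrow>T. signed_delta t h)"
  using assms
proof (induction T arbitrary: gs)
  case Nil
  then show ?case
    using coinv_class_eq_one_iff[of \<one>] subgroup.one_closed[OF commutator_subgroup_is_subgroup]
    by (simp add: chain_class_zero)
next
  case (Cons t T)
  then obtain g gs' where gs: "gs = g # gs'" and g: "g \<in> carrier G" and gs': "set gs' \<subseteq> carrier G"
    "length gs' = length T"
    by (cases gs) auto
  have t: "fst t \<in> H" "fst t \<in> S" and T: "fst ` set T \<subseteq> H \<inter> S"
    using Cons.prems by auto
  have "set (map (signed G) T) \<subseteq> carrier G"
    using T signed_mem by auto
  then have "coinv_class G H (conj_fold G gs (map (signed G) (t # T)))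
      = coinv_class G H (g \<otimes> signed G t \<otimes> inv g) \<otimes>\<^bsub>coinv G H\<^esub>
        coinv_class G H (conj_fold G gs' (map (signed G) T))"
    using g gs' signed_mem[OF t(1)] by (simp add: gs coinv_class_mult)
  also have "\<dots> = chain_class G H S (signed_delta t) \<otimes>\<^bsub>coinv G H\<^esub>
      chain_class G H S (\<lambda>h. \<Sum>t\<leftarrow>T. signed_delta t h)"
    using g signed_mem[OF t(1)] by (simp add: coinv_class_conj chain_class_signed_delta[OF t] Cons.IH[OF gs' T])
  finally show ?case
    by (simp add: chain_class_add)
qed

end

section \<open>The estimate\<close>

lemma (in group) cl_sum_attained:
  obtains gs where "length gs = length ys - 1" "set gs \<subseteq> carrier G"
    "cl_sum G N ys = cl G N (conj_prod G ys gs)"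
proof -
  let ?A = "{cl G N (conj_prod G ys gs) | gs. length gs = length ys - 1 \<and> set gs \<subseteq> carrier G}"
  have "cl G N (conj_prod G ys (replicate (length ys - 1) \<one>)) \<in> ?A"
    by auto
  then have "Inf ?A \<in> ?A"
    by (intro Inf_nat_def1) blast
  then show thesis
    using that by (auto simp: cl_sum_def)
qed

context normal
begin

lemma conj_prod_mem_commutator_subgroup:
  assumes T: "T \<noteq> []" "fst ` set T \<subseteq> H"
    and gs: "set gs \<subseteq> carrier G" "length gs = length T - 1"
    and bd: "(\<lambda>h. \<Sum>t\<leftarrow>T. signed_delta t h :: int) \<in> B1' G H"
  shows "conj_prod G (map (signed G) T) gs \<in> commutator_subgroup G H"
proof -
  obtain c :: "'a \<times> 'a \<Rightarrow> int" where c: "c \<in> C2' G H" and bd_c: "(\<lambda>h. \<Sum>t\<leftarrow>T. signed_delta t h) = bd G c"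
    using bd by (auto simp: B1'_def)
  define S where "S = fst ` supp2 c \<union> snd ` supp2 c \<union> (\<lambda>p. fst p \<otimes> snd p) ` supp2 c \<union> fst ` set T"
  interpret normal_finite_support H G S
  proof
    show "finite S"
      using c by (simp add: S_def C2'_def)
    show "S \<subseteq> carrier G"
      using c T(2) by (auto simp: S_def C2'_def)
  qed
  obtain t T' where t: "T = t # T'"
    using T(1) by (cases T) auto
  have t_mem: "fst t \<in> H" "fst t \<in> S" and T': "fst ` set T' \<subseteq> H \<inter> S"
    using T(2) by (auto simp: S_def t)
  have "set (map (signed G) T') \<subseteq> carrier G"
    using T' signed_mem by auto
  then have "coinv_class G H (conj_prod G (map (signed G) T) gs)
      = coinv_class G H (signed G t) \<otimes>\<^bsub>coinv G H\<^esub> coinv_class G H (conj_fold G gs (map (signed G) T'))"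
    using gs(1) signed_mem[OF t_mem(1)] by (simp add: t conj_prod_Cons coinv_class_mult)
  also have "\<dots> = chain_class G H S (signed_delta t) \<otimes>\<^bsub>coinv G H\<^esub>
      chain_class G H S (\<lambda>h. \<Sum>t\<leftarrow>T'. signed_delta t h)"
    using gs T' by (simp add: t chain_class_signed_delta[OF t_mem] coinv_class_conj_fold)
  also have "\<dots> = chain_class G H S (bd G c)"
    by (simp add: bd_c[symmetric] t chain_class_add)
  also have "\<dots> = \<one>\<^bsub>coinv G H\<^esub>"
    using c by (intro chain_class_bd) (auto simp: S_def)
  finally show ?thesis
    using \<open>set (map (signed G) T') \<subseteq> carrier G\<close> gs(1) signed_mem[OF t_mem(1)]
    by (simp add: coinv_class_eq_one_iff t conj_prod_Cons)
qed

lemma norm'_signed_sum_le: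
  assumes T: "T \<noteq> []" "fst ` set T \<subseteq> H"
    and bd: "(\<lambda>h. \<Sum>t\<leftarrow>T. signed_delta t h :: int) \<in> B1' G H"
  shows "norm' G H (\<lambda>h. \<Sum>t\<leftarrow>T. signed_delta t h)
    \<le> 4 * real (cl_sum G H (map (signed G) T)) + 3 * real (length T) - 2"
proof -
  obtain gs where gs: "length gs = length T - 1" "set gs \<subseteq> carrier G"
    and cl_gs: "cl_sum G H (map (signed G) T) = cl G H (conj_prod G (map (signed G) T) gs)"
    using cl_sum_attained[of "map (signed G) T" H] by auto
  have "conj_prod G (map (signed G) T) gs \<in> commutator_subgroup G H"
    by (rule conj_prod_mem_commutator_subgroup[OF T gs(2,1) bd])
  then obtain ws where ws: "length ws = cl_sum G H (map (signed G) T)" "set ws \<subseteq> carrier G \<times> H"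
    "conj_prod G (map (signed G) T) gs = commut_prod G ws"
    unfolding cl_gs by (rule cl_attained)
  have "norm' G H (\<lambda>h. \<Sum>t\<leftarrow>T. signed_delta t h) \<le> 3 * length T + 4 * length ws - 2"
    by (intro norm'_le_filling has_filling_signed_sum[OF T gs(2,1) ws(2,3)])
  moreover have "2 \<le> 3 * length T + 4 * length ws"
    using T(1) by (cases T) auto
  ultimately show ?thesis
    using ws(1) by (simp add: of_nat_diff)
qed

end

theorem proposition5p20:
  fixes G :: "('a, 'b) monoid_scheme" and N :: "'a set" and xs ys :: "'a list"
  assumes "group G" and "N \<lhd> G"
    and "set xs \<subseteq> N" and "set ys \<subseteq> N"
    and "length xs + length ys \<ge> 1"
    and "(chain_of xs - chain_of ys :: 'a \<Rightarrow> int) \<in> B1' G N"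
  shows "norm' G N (\<lambda>h. real_of_int ((chain_of xs - chain_of ys) h))
         \<le> 4 * real (cl_sum G N (xs @ map (\<lambda>y. inv\<^bsub>G\<^esub> y) ys)) - 1 + 3 * real (length xs + length ys)"
proof -
  interpret normal N G by (rule assms(2))
  define T where "T = map (\<lambda>x. (x, True)) xs @ map (\<lambda>y. (y, False)) ys"
  have T: "T \<noteq> []" "fst ` set T \<subseteq> N"
    using assms(3-5) by (auto simp: T_def)
  have int_eq: "(\<lambda>h. \<Sum>t\<leftarrow>T. signed_delta t h) = (chain_of xs - chain_of ys :: 'a \<Rightarrow> int)"
    unfolding T_def sum_signed_delta by auto
  have real_eq: "(\<lambda>h. \<Sum>t\<leftarrow>T. signed_delta t h) = (\<lambda>h. real_of_int ((chain_of xs - chain_of ys) h))"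
    unfolding T_def sum_signed_delta by (simp add: chain_of_def)
  have signed_T: "map (signed G) T = xs @ map (\<lambda>y. inv\<^bsub>G\<^esub> y) ys"
    by (simp add: T_def signed_def o_def)
  from norm'_signed_sum_le[OF T, unfolded int_eq real_eq signed_T, OF assms(6)] show ?thesis
    by (simp add: T_def)
qed

end
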